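(* Let $E$ be a real Hilbert space with $\dim(E)\ge2$, let $h\in E$ be a unit vector, and let $H^+=\{x\in E\mid (h,x)>0\}$. Define the relation $\preceq$ on $H^+$ by $x\preceq y \iff \|x-y_\perp\|\le y_h$. Then $(H^+,\preceq)$ is a cc sponge.
   Context: For $x\in E$, $x_h=(h,x)$ and $x_\perp=x-(h,x)h$. An orientation on a set $S$ is a reflexive, antisymmetric binary relation $\preceq$. For $P\subseteq S$, $P$ is right-bounded if there is $s\in S$ with $p\preceq s$ for all $p\in P$. An element $x$ is the join of $P$ if $p\preceq x$ for all $p\in P$ and $x\preceq y$ for every $y\in S$ with $p\preceq y$ for all $p\in P$. An oriented set $(S,\preceq)$ is a conditionally complete sponge (cc sponge) if every nonempty right-bounded subset of $S$ has a join. *)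

theory Defs
  imports "HOL-Analysis.Analysis"
begin

definition orientation :: "'a set \<Rightarrow> ('a \<Rightarrow> 'a \<Rightarrow> bool) \<Rightarrow> bool" where
  "orientation S le \<longleftrightarrow>
     (\<forall>x\<in>S. le x x) \<and> (\<forall>x\<in>S. \<forall>y\<in>S. le x y \<and> le y x \<longrightarrow> x = y)"

definition right_bounded :: "'a set \<Rightarrow> ('a \<Rightarrow> 'a \<Rightarrow> bool) \<Rightarrow> 'a set \<Rightarrow> bool" where
  "right_bounded S le P \<longleftrightarrow> (\<exists>s\<in>S. \<forall>p\<in>P. le p s)"

definition is_join :: "'a set \<Rightarrow> ('a \<Rightarrow> 'a \<Rightarrow> bool) \<Rightarrow> 'a set \<Rightarrow> 'a \<Rightarrow> bool" where
  "is_join S le P x \<longleftrightarrow> x \<in> S \<and> (\<forall>p\<in>P. le p x) \<and>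
     (\<forall>y\<in>S. (\<forall>p\<in>P. le p y) \<longrightarrow> le x y)"

definition cc_sponge :: "'a set \<Rightarrow> ('a \<Rightarrow> 'a \<Rightarrow> bool) \<Rightarrow> bool" where
  "cc_sponge S le \<longleftrightarrow> orientation S le \<and>
     (\<forall>P. P \<subseteq> S \<and> P \<noteq> {} \<and> right_bounded S le P \<longrightarrow> (\<exists>x. is_join S le P x))"

definition comp_h :: "'a::real_inner \<Rightarrow> 'a \<Rightarrow> real" where
  "comp_h h x = h \<bullet> x"

definition comp_perp :: "'a::real_inner \<Rightarrow> 'a \<Rightarrow> 'a" where
  "comp_perp h x = x - (h \<bullet> x) *\<^sub>R h"

definition halfspace :: "'a::real_inner \<Rightarrow> 'a set" where
  "halfspace h = {x. h \<bullet> x > 0}"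

definition sponge_le :: "'a::real_inner \<Rightarrow> 'a \<Rightarrow> 'a \<Rightarrow> bool" where
  "sponge_le h x y \<longleftrightarrow> norm (x - comp_perp h y) \<le> comp_h h y"

end

theory Submission
  imports Defs
begin

(* A point y of the half-space stands for the closed ball with centre y_perp on the hyperplane
   orthogonal to h and radius y_h, and x \<preceq> y says that x lies in that ball. So the upper bounds
   of P are the balls centred on the hyperplane that contain P, and the join is c + m h for the
   smallest such ball B(c, m). The parallelogram law makes minimising sequences of centres Cauchy,
   so this ball exists by completeness; the same law gives |c - c'|^2 + m^2 \<le> r'^2 for every
   other enclosing ball B(c', r'), which says precisely that c + m h \<preceq> y. *)

lemma norm_diff_convex_comb_sq:
  fixes p a b :: "'a::real_inner"
  shows "(norm (p - ((1 - t) *\<^sub>R a + t *\<^sub>R b)))\<^sup>2 =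
    (1 - t) * (norm (p - a))\<^sup>2 + t * (norm (p - b))\<^sup>2 - t * (1 - t) * (norm (a - b))\<^sup>2"
  unfolding power2_norm_eq_inner
  by (simp add: inner_diff_left inner_diff_right inner_add_left inner_add_right inner_commute
      algebra_simps)

lemma subset_cball_convex_comb:
  fixes a b :: "'a::real_inner"
  assumes "P \<subseteq> cball a ra" "P \<subseteq> cball b rb" "0 \<le> t" "t \<le> 1"
  shows "P \<subseteq> cball ((1 - t) *\<^sub>R a + t *\<^sub>R b)
           (sqrt ((1 - t) * ra\<^sup>2 + t * rb\<^sup>2 - t * (1 - t) * (dist a b)\<^sup>2))"
proof
  fix p assume "p \<in> P"
  then have "dist a p \<le> ra" "dist b p \<le> rb"
    using assms(1,2) by auto
  then have "(dist a p)\<^sup>2 \<le> ra\<^sup>2" "(dist b p)\<^sup>2 \<le> rb\<^sup>2"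
    by (auto intro: power_mono)
  then have "(1 - t) * (dist a p)\<^sup>2 + t * (dist b p)\<^sup>2 \<le> (1 - t) * ra\<^sup>2 + t * rb\<^sup>2"
    using assms(3,4) by (intro add_mono mult_left_mono) auto
  then have "(dist ((1 - t) *\<^sub>R a + t *\<^sub>R b) p)\<^sup>2
      \<le> (1 - t) * ra\<^sup>2 + t * rb\<^sup>2 - t * (1 - t) * (dist a b)\<^sup>2"
    using norm_diff_convex_comb_sq[of p t a b] by (simp add: dist_norm norm_minus_commute)
  then show "p \<in> cball ((1 - t) *\<^sub>R a + t *\<^sub>R b)
      (sqrt ((1 - t) * ra\<^sup>2 + t * rb\<^sup>2 - t * (1 - t) * (dist a b)\<^sup>2))"
    by (simp add: real_le_rsqrt)
qed

lemma enclosing_radius_sq_le_convex_comb: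
  fixes C :: "'a::real_inner set"
  assumes "convex C" "0 \<le> m"
    and lower: "\<And>c r. c \<in> C \<Longrightarrow> P \<subseteq> cball c r \<Longrightarrow> m \<le> r"
    and "a \<in> C" "P \<subseteq> cball a ra" "b \<in> C" "P \<subseteq> cball b rb" "0 \<le> t" "t \<le> 1"
  shows "m\<^sup>2 \<le> (1 - t) * ra\<^sup>2 + t * rb\<^sup>2 - t * (1 - t) * (dist a b)\<^sup>2"
    (is "_ \<le> ?q")
proof -
  have "(1 - t) *\<^sub>R a + t *\<^sub>R b \<in> C"
    using assms by (intro convexD) auto
  then have "m \<le> sqrt ?q"
    using lower subset_cball_convex_comb assms(5,7-9) by blast
  moreover from this have "0 \<le> ?q"
    using \<open>0 \<le> m\<close> by (metis order_trans real_sqrt_ge_0_iff)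
  ultimately show ?thesis
    using \<open>0 \<le> m\<close> by (metis power_mono real_sqrt_pow2)
qed

lemma Cauchy_if_dist_sq_le:
  fixes f :: "nat \<Rightarrow> 'a::metric_space"
  assumes bound: "\<And>m n. (dist (f m) (f n))\<^sup>2 \<le> g m + g n" and "g \<longlonglongrightarrow> 0"
  shows "Cauchy f"
proof (rule metric_CauchyI)
  fix e :: real assume "0 < e"
  then have "\<forall>\<^sub>F n in sequentially. g n < e\<^sup>2 / 2"
    using \<open>g \<longlonglongrightarrow> 0\<close> by (intro order_tendstoD) auto
  then obtain M where M: "\<And>n. n \<ge> M \<Longrightarrow> g n < e\<^sup>2 / 2"
    by (auto simp: eventually_sequentially)
  have "dist (f m) (f n) < e" if "m \<ge> M" "n \<ge> M" for m n
  proof -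
    have "(dist (f m) (f n))\<^sup>2 < e\<^sup>2"
      using bound[of m n] M[OF that(1)] M[OF that(2)] by linarith
    then show ?thesis
      using \<open>0 < e\<close> by (simp add: power_less_imp_less_base)
  qed
  then show "\<exists>M. \<forall>m\<ge>M. \<forall>n\<ge>M. dist (f m) (f n) < e"
    by blast
qed

lemma min_enclosing_ball_exists:
  fixes C :: "'a::{real_inner,complete_space} set"
  assumes "closed C" "convex C" "c0 \<in> C" "P \<subseteq> cball c0 r0" "P \<noteq> {}"
  obtains c m where "c \<in> C" "P \<subseteq> cball c m"
    and "\<And>c' r'. c' \<in> C \<Longrightarrow> P \<subseteq> cball c' r' \<Longrightarrow> m \<le> r'"
proof -
  define A where "A = {r. \<exists>c\<in>C. P \<subseteq> cball c r}"
  have radius_nonneg: "0 \<le> r" if "P \<subseteq> cball c r" for c r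
    using that \<open>P \<noteq> {}\<close> by (metis cball_eq_empty not_le subset_empty)
  have "A \<noteq> {}" and "bdd_below A"
    using assms(3,4) radius_nonneg unfolding A_def bdd_below_def by blast+
  define m where "m = Inf A"
  have lower: "m \<le> r" if "c \<in> C" "P \<subseteq> cball c r" for c r
    unfolding m_def using that \<open>bdd_below A\<close> by (auto intro: cInf_lower simp: A_def)
  have "0 \<le> m"
    unfolding m_def using \<open>A \<noteq> {}\<close> radius_nonneg by (auto intro!: cInf_greatest simp: A_def)
  have "m \<in> closure A"
    unfolding m_def using \<open>A \<noteq> {}\<close> \<open>bdd_below A\<close> by (rule closure_contains_Inf)
  then obtain rs where "\<And>n. rs n \<in> A" and rs: "rs \<longlonglongrightarrow> m"
    unfolding closure_sequential by blast
  then have "\<forall>n. \<exists>c. c \<in> C \<and> P \<subseteq> cball c (rs n)"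
    unfolding A_def by blast
  then obtain cs where cs: "\<And>n. cs n \<in> C" "\<And>n. P \<subseteq> cball (cs n) (rs n)"
    by metis
  have mid: "m\<^sup>2 \<le> (1 - 1/2) * (rs k)\<^sup>2 + 1/2 * (rs n)\<^sup>2 - 1/2 * (1 - 1/2) * (dist (cs k) (cs n))\<^sup>2"
    for k n
    by (rule enclosing_radius_sq_le_convex_comb[OF \<open>convex C\<close> \<open>0 \<le> m\<close> _ cs(1,2) cs(1,2)])
      (simp_all add: lower)
  have "(dist (cs k) (cs n))\<^sup>2 \<le> 2 * ((rs k)\<^sup>2 - m\<^sup>2) + 2 * ((rs n)\<^sup>2 - m\<^sup>2)" for k n
    using mid[of k n] by simp
  moreover have "(\<lambda>n. 2 * ((rs n)\<^sup>2 - m\<^sup>2)) \<longlonglongrightarrow> 0"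
    using rs by (auto intro!: tendsto_eq_intros)
  ultimately have "Cauchy cs"
    by (rule Cauchy_if_dist_sq_le)
  then obtain c where c: "cs \<longlonglongrightarrow> c"
    using Cauchy_convergent_iff convergent_def by blast
  have "c \<in> C"
    using \<open>closed C\<close> cs(1) c by (rule closed_sequentially)
  moreover have "P \<subseteq> cball c m"
  proof
    fix p assume "p \<in> P"
    then have "\<forall>\<^sub>F n in sequentially. dist (cs n) p \<le> rs n"
      using cs(2) by (intro always_eventually allI) (meson mem_cball subsetD)
    moreover have "(\<lambda>n. dist (cs n) p) \<longlonglongrightarrow> dist c p"
      using c by (intro tendsto_dist tendsto_const)
    ultimately have "dist c p \<le> m"
      using tendsto_le[OF sequentially_bot rs] by blast
    then show "p \<in> cball c m"
      by simp
  qed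
  ultimately show thesis
    using lower that by blast
qed

lemma min_enclosing_ball_dist_sq_le:
  fixes C :: "'a::real_inner set"
  assumes "convex C" "P \<noteq> {}" "c \<in> C" "P \<subseteq> cball c m"
    and lower: "\<And>c r. c \<in> C \<Longrightarrow> P \<subseteq> cball c r \<Longrightarrow> m \<le> r"
    and "c' \<in> C" "P \<subseteq> cball c' r'"
  shows "(dist c c')\<^sup>2 + m\<^sup>2 \<le> r'\<^sup>2"
proof -
  have "0 \<le> m"
    using assms(2,4) by (metis cball_eq_empty not_le subset_empty)
  have "z * (dist c c')\<^sup>2 \<le> r'\<^sup>2 - m\<^sup>2" if "0 < z" "z < 1" for z
  proof -
    have "m\<^sup>2 \<le> z * m\<^sup>2 + (1 - z) * r'\<^sup>2 - (1 - z) * z * (dist c c')\<^sup>2"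
      using enclosing_radius_sq_le_convex_comb[OF \<open>convex C\<close> \<open>0 \<le> m\<close> lower assms(3,4,6,7),
          where t = "1 - z"] that by simp
    then have "(1 - z) * (z * (dist c c')\<^sup>2) \<le> (1 - z) * (r'\<^sup>2 - m\<^sup>2)"
      by (simp add: algebra_simps)
    then show ?thesis
      using that by simp
  qed
  then have "(dist c c')\<^sup>2 \<le> r'\<^sup>2 - m\<^sup>2"
    by (rule field_le_mult_one_interval)
  then show ?thesis
    by simp
qed

lemma comp_perp_add_comp_h: "comp_perp h x + (h \<bullet> x) *\<^sub>R h = x"
  by (simp add: comp_perp_def)

lemma inner_comp_perp:
  assumes "norm h = 1"
  shows "h \<bullet> comp_perp h x = 0"
  using assms by (simp add: comp_perp_def inner_diff_right norm_eq_1)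

lemma norm_diff_sq_comp_perp:
  assumes "norm h = 1" "h \<bullet> c = 0"
  shows "(norm (x - c))\<^sup>2 = (norm (comp_perp h x - c))\<^sup>2 + (h \<bullet> x)\<^sup>2"
proof -
  have "h \<bullet> (comp_perp h x - c) = 0"
    using assms inner_comp_perp[OF assms(1)] by (simp add: inner_diff_right)
  then have "orthogonal (comp_perp h x - c) ((h \<bullet> x) *\<^sub>R h)"
    by (simp add: orthogonal_def inner_commute)
  then have "(norm (comp_perp h x - c + (h \<bullet> x) *\<^sub>R h))\<^sup>2
      = (norm (comp_perp h x - c))\<^sup>2 + (h \<bullet> x)\<^sup>2"
    using assms(1) by (simp add: norm_add_Pythagorean power_mult_distrib)
  moreover have "comp_perp h x - c + (h \<bullet> x) *\<^sub>R h = x - c"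
    using comp_perp_add_comp_h[of h x] by (simp add: algebra_simps)
  ultimately show ?thesis
    by simp
qed

lemma sponge_le_iff_mem_cball: "sponge_le h x y \<longleftrightarrow> x \<in> cball (comp_perp h y) (h \<bullet> y)"
  by (simp add: sponge_le_def comp_h_def dist_norm norm_minus_commute)

lemma sponge_le_iff:
  assumes "norm h = 1" "0 \<le> h \<bullet> y"
  shows "sponge_le h x y \<longleftrightarrow>
    (dist (comp_perp h x) (comp_perp h y))\<^sup>2 + (h \<bullet> x)\<^sup>2 \<le> (h \<bullet> y)\<^sup>2"
proof -
  have "sponge_le h x y \<longleftrightarrow> (norm (x - comp_perp h y))\<^sup>2 \<le> (h \<bullet> y)\<^sup>2"
    using assms(2) by (simp add: sponge_le_def comp_h_def power2_le_iff_abs_le)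
  also have "\<dots> \<longleftrightarrow> (dist (comp_perp h x) (comp_perp h y))\<^sup>2 + (h \<bullet> x)\<^sup>2 \<le> (h \<bullet> y)\<^sup>2"
    by (subst norm_diff_sq_comp_perp[OF assms(1) inner_comp_perp[OF assms(1)]])
      (simp add: dist_norm)
  finally show ?thesis .
qed

lemma orientation_sponge_le:
  assumes "norm h = 1"
  shows "orientation (halfspace h) (sponge_le h)"
  unfolding orientation_def
proof (intro conjI ballI impI)
  fix x assume "x \<in> halfspace h"
  then show "sponge_le h x x"
    using assms by (simp add: sponge_le_iff halfspace_def)
next
  fix x y assume "x \<in> halfspace h" "y \<in> halfspace h" "sponge_le h x y \<and> sponge_le h y x"
  then have "(dist (comp_perp h x) (comp_perp h y))\<^sup>2 + (h \<bullet> x)\<^sup>2 \<le> (h \<bullet> y)\<^sup>2"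
    and "(dist (comp_perp h x) (comp_perp h y))\<^sup>2 + (h \<bullet> y)\<^sup>2 \<le> (h \<bullet> x)\<^sup>2"
    and "0 < h \<bullet> x" "0 < h \<bullet> y"
    using assms by (auto simp: sponge_le_iff halfspace_def dist_commute)
  then have "(dist (comp_perp h x) (comp_perp h y))\<^sup>2 = 0" and "(h \<bullet> x)\<^sup>2 = (h \<bullet> y)\<^sup>2"
    and "0 < h \<bullet> x" "0 < h \<bullet> y"
    using zero_le_power2[of "dist (comp_perp h x) (comp_perp h y)"] by linarith+
  then have "comp_perp h x = comp_perp h y" and "h \<bullet> x = h \<bullet> y"
    by (simp_all add: power2_eq_iff_nonneg)
  then show "x = y"
    by (metis comp_perp_add_comp_h)
qed

lemma sponge_join_exists:
  fixes h :: "'a::{real_inner,complete_space}"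
  assumes unit: "norm h = 1" and "P \<subseteq> halfspace h" "P \<noteq> {}"
    and "right_bounded (halfspace h) (sponge_le h) P"
  shows "\<exists>x. is_join (halfspace h) (sponge_le h) P x"
proof -
  let ?C = "{c. h \<bullet> c = 0}"
  have upper_iff: "(\<forall>p\<in>P. sponge_le h p y) \<longleftrightarrow> P \<subseteq> cball (comp_perp h y) (h \<bullet> y)" for y
    by (auto simp: sponge_le_iff_mem_cball)
  obtain s where "P \<subseteq> cball (comp_perp h s) (h \<bullet> s)"
    using assms(4) upper_iff unfolding right_bounded_def by blast
  then obtain c m where "c \<in> ?C" "P \<subseteq> cball c m"
    and min: "\<And>c' r'. c' \<in> ?C \<Longrightarrow> P \<subseteq> cball c' r' \<Longrightarrow> m \<le> r'"
    using min_enclosing_ball_exists[OF closed_hyperplane convex_hyperplane _ _ \<open>P \<noteq> {}\<close>]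
      inner_comp_perp[OF unit] by blast
  define x where "x = c + m *\<^sub>R h"
  have x_comps: "comp_perp h x = c" "h \<bullet> x = m"
    using \<open>c \<in> ?C\<close> unit by (simp_all add: x_def comp_perp_def inner_add_right norm_eq_1)
  obtain p where "p \<in> P"
    using \<open>P \<noteq> {}\<close> by blast
  then have "0 < h \<bullet> (p - c)"
    using \<open>c \<in> ?C\<close> \<open>P \<subseteq> halfspace h\<close> by (auto simp: halfspace_def inner_diff_right)
  also have "\<dots> \<le> norm (p - c)"
    using norm_cauchy_schwarz[of h "p - c"] unit by simp
  also have "\<dots> \<le> m"
    using \<open>p \<in> P\<close> \<open>P \<subseteq> cball c m\<close> by (auto simp: dist_norm norm_minus_commute)
  finally have "x \<in> halfspace h"
    using x_comps by (simp add: halfspace_def)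
  moreover have "\<forall>p\<in>P. sponge_le h p x"
    using \<open>P \<subseteq> cball c m\<close> x_comps upper_iff by simp
  moreover have "sponge_le h x y"
    if "y \<in> halfspace h" "\<forall>p\<in>P. sponge_le h p y" for y
  proof -
    have "(dist c (comp_perp h y))\<^sup>2 + m\<^sup>2 \<le> (h \<bullet> y)\<^sup>2"
      using min_enclosing_ball_dist_sq_le[OF convex_hyperplane \<open>P \<noteq> {}\<close> \<open>c \<in> ?C\<close>
          \<open>P \<subseteq> cball c m\<close>]
        min inner_comp_perp[OF unit] that(2) upper_iff by blast
    then show ?thesis
      using that(1) unit x_comps by (simp add: sponge_le_iff halfspace_def)
  qed
  ultimately show ?thesis
    unfolding is_join_def by blast
qed

theorem mainTheorem2:
  fixes h :: "'a::{real_inner, complete_space}"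
  assumes dim2: "\<exists>B::'a set. independent B \<and> finite B \<and> card B = 2"
    and unit: "norm h = 1"
  shows "cc_sponge (halfspace h) (sponge_le h)"
  using orientation_sponge_le[OF unit] sponge_join_exists[OF unit]
  unfolding cc_sponge_def by blast

end
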